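(* Let $V = W_0 \oplus W \oplus W_1$ be a finite-dimensional real vector space written as a direct sum of subspaces with $W \neq \{0\}$, and let $V_0 = W_0 + W$, $V_1 = W + W_1$. Let $\Gamma_0, \Gamma_1 \leq \operatorname{GL}(V)$ be groups such that for $i = 0,1$: (1) $\Gamma_i V_i = V_i$ and the representation of $\Gamma_i$ on $V_i$ is irreducible; (2) $\Gamma_i$ acts trivially on $W_{1-i}$, i.e. $\gamma w = w$ for all $\gamma \in \Gamma_i$ and $w \in W_{1-i}$. Then the action of the group $\Gamma = \langle \Gamma_0 \cup \Gamma_1 \rangle$ on $V$ is irreducible. *)

theory Defs
  imports "HOL-Analysis.Analysis"
begin

text \<open>A finite-dimensional real vector space is modelled by a type of class euclidean_space.
  GL(V) is the set of invertible linear self-maps.\<close>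

definition GL :: "('a::real_vector \<Rightarrow> 'a) set" where
  "GL = {f. linear f \<and> bij f}"

definition is_subgroup_GL :: "('a::real_vector \<Rightarrow> 'a) set \<Rightarrow> bool" where
  "is_subgroup_GL G \<longleftrightarrow> G \<subseteq> GL \<and> id \<in> G \<and>
     (\<forall>f\<in>G. \<forall>g\<in>G. f \<circ> g \<in> G) \<and> (\<forall>f\<in>G. inv f \<in> G)"

inductive_set gen_group :: "('a \<Rightarrow> 'a) set \<Rightarrow> ('a \<Rightarrow> 'a) set" for S where
  gen_id: "id \<in> gen_group S"
| gen_base: "s \<in> S \<Longrightarrow> s \<in> gen_group S"
| gen_inv: "s \<in> S \<Longrightarrow> inv s \<in> gen_group S"
| gen_comp: "f \<in> gen_group S \<Longrightarrow> g \<in> gen_group S \<Longrightarrow> f \<circ> g \<in> gen_group S"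

definition irreducible_on :: "('a::real_vector \<Rightarrow> 'a) set \<Rightarrow> 'a set \<Rightarrow> bool" where
  "irreducible_on G U \<longleftrightarrow> subspace U \<and> U \<noteq> {0} \<and>
     (\<forall>U'. subspace U' \<and> U' \<subseteq> U \<and> (\<forall>g\<in>G. g ` U' \<subseteq> U') \<longrightarrow> U' = {0} \<or> U' = U)"

end

theory Submission
  imports Defs
begin

text \<open>Let \<open>U\<close> be a \<open>\<Gamma>\<close>-invariant subspace. By irreducibility, \<open>U \<inter> V\<^sub>i\<close> is \<open>0\<close> or \<open>V\<^sub>i\<close>.
  If \<open>U\<close> contains \<open>V\<^sub>0\<close> or \<open>V\<^sub>1\<close>, it contains \<open>W \<noteq> 0\<close>, hence both, hence all of \<open>V\<close>.
  Otherwise \<open>U\<close> meets both \<open>V\<^sub>i\<close> trivially. Write \<open>u \<in> U\<close> as \<open>u = v + c\<close> with \<open>v \<in> V\<^sub>0\<close>,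
  \<open>c \<in> W\<^sub>1\<close>; since \<open>\<Gamma>\<^sub>0\<close> fixes \<open>c\<close>, \<open>g u - u = g v - v \<in> U \<inter> V\<^sub>0 = 0\<close>, so \<open>v\<close> is
  \<open>\<Gamma>\<^sub>0\<close>-fixed. The \<open>\<Gamma>\<^sub>0\<close>-fixed vectors of \<open>V\<^sub>0\<close> form an invariant subspace: if it is \<open>0\<close>,
  then \<open>u = c \<in> V\<^sub>1\<close>; if it is \<open>V\<^sub>0\<close>, then every subspace of \<open>V\<^sub>0\<close> is invariant, so \<open>W\<^sub>0 = 0\<close>
  and again \<open>u \<in> V\<^sub>1\<close>. Thus \<open>U \<subseteq> U \<inter> V\<^sub>1 = 0\<close>.\<close>

lemma irreducible_onD:
  assumes "irreducible_on G V" "subspace U" "U \<subseteq> V" "\<forall>g\<in>G. g ` U \<subseteq> U"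
  shows "U = {0} \<or> U = V"
  using assms unfolding irreducible_on_def by blast

lemma irreducible_onI:
  assumes "subspace V" "V \<noteq> {0}"
    and "\<And>U. subspace U \<Longrightarrow> U \<subseteq> V \<Longrightarrow> \<forall>g\<in>G. g ` U \<subseteq> U \<Longrightarrow> U = {0} \<or> U = V"
  shows "irreducible_on G V"
  using assms unfolding irreducible_on_def by blast

lemma is_subgroup_GL_linear: "is_subgroup_GL G \<Longrightarrow> \<forall>g\<in>G. linear g"
  unfolding is_subgroup_GL_def GL_def by blast

lemma irreducible_on_Int_invariant:
  assumes "irreducible_on G V" "\<forall>g\<in>G. g ` V \<subseteq> V"
    and "subspace U" "\<forall>g\<in>G. g ` U \<subseteq> U"
  shows "U \<inter> V = {0} \<or> V \<subseteq> U"
proof -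
  have "subspace (U \<inter> V)"
    using assms(1,3) by (simp add: irreducible_on_def subspace_inter)
  moreover have "\<forall>g\<in>G. g ` (U \<inter> V) \<subseteq> U \<inter> V"
    using assms(2,4) by blast
  ultimately have "U \<inter> V = {0} \<or> U \<inter> V = V"
    by (rule irreducible_onD[OF assms(1) _ Int_lower2])
  then show ?thesis
    by blast
qed

lemma irreducible_on_fixed_points:
  assumes "irreducible_on G V" "\<forall>g\<in>G. linear g"
  shows "{x \<in> V. \<forall>g\<in>G. g x = x} = {0} \<or> (\<forall>g\<in>G. \<forall>x\<in>V. g x = x)"
proof -
  let ?F = "{x \<in> V. \<forall>g\<in>G. g x = x}"
  have "subspace V"
    using assms(1) by (simp add: irreducible_on_def)
  with assms(2) have "subspace ?F"
    by (auto simp: subspace_def linear_add linear_scale linear_0)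
  moreover have "?F \<subseteq> V"
    by blast
  moreover have "\<forall>g\<in>G. g ` ?F \<subseteq> ?F"
  proof (intro ballI image_subsetI)
    fix g x assume "g \<in> G" and x: "x \<in> ?F"
    then have "g x = x" by blast
    with x show "g x \<in> ?F" by simp
  qed
  ultimately have "?F = {0} \<or> ?F = V"
    by (rule irreducible_onD[OF assms(1)])
  then show ?thesis
    by blast
qed

lemma fixed_if_invariant_Int_zero:
  assumes "linear g" "g ` V \<subseteq> V" "g c = c"
    and "subspace U" "g ` U \<subseteq> U" "U \<inter> V = {0}"
    and "subspace V" "v \<in> V" "v + c \<in> U"
  shows "g v = v"
proof -
  have "g v - v = g (v + c) - (v + c)"
    using assms(1,3) by (simp add: linear_add)
  also have "\<dots> \<in> U"
    using assms(4,5,9) by (blast intro: subspace_diff)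
  finally have "g v - v \<in> U \<inter> V"
    using assms(2,7,8) by (blast intro: subspace_diff)
  with assms(6) show ?thesis
    by simp
qed

lemma subset_sums_left:
  fixes A B :: "'a::monoid_add set"
  shows "0 \<in> B \<Longrightarrow> A \<subseteq> {a + b | a b. a \<in> A \<and> b \<in> B}"
  by force

lemma subset_sums_right:
  fixes A B :: "'a::monoid_add set"
  shows "0 \<in> A \<Longrightarrow> B \<subseteq> {a + b | a b. a \<in> A \<and> b \<in> B}"
  by force

lemma Int_eq_zero_if_unique_sum:
  assumes "subspace W0" "subspace W" "subspace W1"
    and "\<And>a b c. a \<in> W0 \<Longrightarrow> b \<in> W \<Longrightarrow> c \<in> W1 \<Longrightarrow> a + b + c = 0 \<Longrightarrow> a = 0 \<and> b = 0 \<and> c = 0"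
  shows "W0 \<inter> W = {0}"
proof (intro subset_antisym subsetI)
  fix x assume "x \<in> W0 \<inter> W"
  then show "x \<in> {0}"
    using assms(4)[of x "- x" 0] assms(2,3) subspace_neg subspace_0 by auto
qed (use assms(1,2) subspace_0 in auto)

lemma invariant_subspace_Int_zero_subset_sum:
  fixes W0 W W1 :: "'a::real_vector set"
  assumes "subspace W0" "subspace W" "W0 \<inter> W = {0}" "W \<noteq> {0}"
    and decomp: "{a + b + c | a b c. a \<in> W0 \<and> b \<in> W \<and> c \<in> W1} = UNIV"
    and V0: "V0 = {a + b | a b. a \<in> W0 \<and> b \<in> W}"
    and V1: "V1 = {b + c | b c. b \<in> W \<and> c \<in> W1}"
    and lin: "\<forall>g\<in>\<Gamma>. linear g" and stable: "\<forall>g\<in>\<Gamma>. g ` V0 \<subseteq> V0"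
    and irr: "irreducible_on \<Gamma> V0" and fix_W1: "\<forall>g\<in>\<Gamma>. \<forall>w\<in>W1. g w = w"
    and U: "subspace U" "\<forall>g\<in>\<Gamma>. g ` U \<subseteq> U" "U \<inter> V0 = {0}"
  shows "U \<subseteq> V1"
proof
  fix u assume "u \<in> U"
  have "u \<in> {a + b + c | a b c. a \<in> W0 \<and> b \<in> W \<and> c \<in> W1}"
    using decomp by simp
  then obtain a b c where u: "u = (a + b) + c" and abc: "a \<in> W0" "b \<in> W" "c \<in> W1"
    by blast
  have "subspace V0"
    using irr by (simp add: irreducible_on_def)
  have "a + b \<in> V0"
    unfolding V0 using abc by blast
  have "W0 \<subseteq> V0" "W \<subseteq> V0"
    unfolding V0 using assms(1,2) by (simp_all add: subset_sums_left subset_sums_right subspace_0)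
  consider "{x \<in> V0. \<forall>g\<in>\<Gamma>. g x = x} = {0}" | "\<forall>g\<in>\<Gamma>. \<forall>x\<in>V0. g x = x"
    using irreducible_on_fixed_points[OF irr lin] by blast
  then show "u \<in> V1"
  proof cases
    case 1
    have "g (a + b) = a + b" if "g \<in> \<Gamma>" for g
      by (rule fixed_if_invariant_Int_zero[of g V0 c U])
        (use that lin stable fix_W1 U \<open>subspace V0\<close> \<open>a + b \<in> V0\<close> \<open>u \<in> U\<close> abc u in auto)
    with \<open>a + b \<in> V0\<close> have "a + b \<in> {x \<in> V0. \<forall>g\<in>\<Gamma>. g x = x}"
      by blast
    with 1 have "u = c"
      using u by simp
    then show ?thesis
      using subset_sums_right[OF subspace_0[OF assms(2)]] abc(3) unfolding V1 by blast
  next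
    case 2
    have "\<forall>g\<in>\<Gamma>. g ` W0 \<subseteq> W0"
    proof (intro ballI image_subsetI)
      fix g x assume "g \<in> \<Gamma>" "x \<in> W0"
      with 2 \<open>W0 \<subseteq> V0\<close> have "g x = x" by blast
      with \<open>x \<in> W0\<close> show "g x \<in> W0" by simp
    qed
    then have "W0 = {0} \<or> W0 = V0"
      by (rule irreducible_onD[OF irr assms(1) \<open>W0 \<subseteq> V0\<close>])
    moreover have "W0 \<noteq> V0"
    proof
      assume "W0 = V0"
      with \<open>W \<subseteq> V0\<close> assms(3) have "W \<subseteq> {0}" by blast
      with assms(4) subspace_0[OF assms(2)] show False by blast
    qed
    ultimately have "u = b + c"
      using u abc(1) by simp
    then show ?thesis
      unfolding V1 using abc by blast
  qed
qed

lemma subspace_eq_UNIV_if_contains_summands: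
  assumes "subspace U" "W0 \<subseteq> U" "W \<subseteq> U" "W1 \<subseteq> U"
    and "{a + b + c | a b c. a \<in> W0 \<and> b \<in> W \<and> c \<in> W1} = UNIV"
  shows "U = UNIV"
proof -
  have "{a + b + c | a b c. a \<in> W0 \<and> b \<in> W \<and> c \<in> W1} \<subseteq> U"
    using assms(1-4) by (blast intro: subspace_add)
  with assms(5) show ?thesis
    by auto
qed

theorem lemmaA4:
  fixes W0 W W1 :: "'a::euclidean_space set"
    and \<Gamma>0 \<Gamma>1 :: "('a \<Rightarrow> 'a) set"
  assumes "subspace W0" and "subspace W" and "subspace W1"
    and "{a + b + c | a b c. a \<in> W0 \<and> b \<in> W \<and> c \<in> W1} = UNIV"
    and "\<And>a b c. a \<in> W0 \<Longrightarrow> b \<in> W \<Longrightarrow> c \<in> W1 \<Longrightarrow> a + b + c = 0 \<Longrightarrow>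
           a = 0 \<and> b = 0 \<and> c = 0"
    and "W \<noteq> {0}"
    and "V0 = {a + b | a b. a \<in> W0 \<and> b \<in> W}"
    and "V1 = {b + c | b c. b \<in> W \<and> c \<in> W1}"
    and "is_subgroup_GL \<Gamma>0" and "is_subgroup_GL \<Gamma>1"
    and "\<forall>g\<in>\<Gamma>0. g ` V0 = V0" and "irreducible_on \<Gamma>0 V0"
    and "\<forall>g\<in>\<Gamma>1. g ` V1 = V1" and "irreducible_on \<Gamma>1 V1"
    and "\<forall>g\<in>\<Gamma>0. \<forall>w\<in>W1. g w = w"
    and "\<forall>g\<in>\<Gamma>1. \<forall>w\<in>W0. g w = w"
  shows "irreducible_on (gen_group (\<Gamma>0 \<union> \<Gamma>1)) UNIV"
proof (rule irreducible_onI[OF subspace_UNIV])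
  show "UNIV \<noteq> {0::'a}"
    using assms(6) by blast
  fix U assume "subspace U" "\<forall>g\<in>gen_group (\<Gamma>0 \<union> \<Gamma>1). g ` U \<subseteq> U"
  then have U: "subspace U" "\<forall>g\<in>\<Gamma>0. g ` U \<subseteq> U" "\<forall>g\<in>\<Gamma>1. g ` U \<subseteq> U"
    by (simp_all add: gen_group.gen_base)
  have U_V0: "U \<inter> V0 = {0} \<or> V0 \<subseteq> U"
    by (rule irreducible_on_Int_invariant[OF assms(12) _ U(1,2)]) (use assms(11) in blast)
  have U_V1: "U \<inter> V1 = {0} \<or> V1 \<subseteq> U"
    by (rule irreducible_on_Int_invariant[OF assms(14) _ U(1,3)]) (use assms(13) in blast)
  have summands: "W0 \<subseteq> V0" "W \<subseteq> V0" "W \<subseteq> V1" "W1 \<subseteq> V1"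
    unfolding assms(7,8) using assms(1-3)
    by (simp_all add: subset_sums_left subset_sums_right subspace_0)
  show "U = {0} \<or> U = UNIV"
  proof (cases "U \<inter> V0 = {0} \<and> U \<inter> V1 = {0}")
    case True
    have stable: "\<forall>g\<in>\<Gamma>0. g ` V0 \<subseteq> V0"
      using assms(11) by blast
    have "U \<subseteq> V1"
      using invariant_subspace_Int_zero_subset_sum[OF assms(1,2) Int_eq_zero_if_unique_sum[OF assms(1-3,5)]
          assms(6,4,7,8) is_subgroup_GL_linear[OF assms(9)] stable assms(12,15) U(1,2)] True by blast
    with True show ?thesis
      by blast
  next
    case False
    from False U_V0 U_V1 summands(2,3) have "W \<subseteq> U"
      by blast
    with summands(2,3) have "W \<subseteq> U \<inter> V0" "W \<subseteq> U \<inter> V1"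
      by blast+
    then have "U \<inter> V0 \<noteq> {0}" "U \<inter> V1 \<noteq> {0}"
      using assms(6) subspace_0[OF assms(2)] by auto
    with U_V0 U_V1 have "V0 \<subseteq> U" "V1 \<subseteq> U"
      by simp_all
    with summands have "U = UNIV"
      by (intro subspace_eq_UNIV_if_contains_summands[OF U(1) _ _ _ assms(4)]) auto
    then show ?thesis ..
  qed
qed

end
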